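(* Let $d\ge 2$ and let $\mathcal F$ be an affine invariant control family of globally Lipschitz maps $\mathbb R^d\to\mathbb R^d$. Then the control system with control family $\mathcal F$ possesses the exact universal interpolation property if and only if there exists $f=(f_1,\dots,f_d)\in\mathcal F$ such that at least one component $f_j:\mathbb R^d\to\mathbb R$ is non-linear, i.e. not of the form $x\mapsto a^\top x+c$ with $a\in\mathbb R^d$, $c\in\mathbb R$.
   Context: A control family is a set $\mathcal F$ of globally Lipschitz maps $\mathbb R^d\to\mathbb R^d$ (the right-hand sides $x\mapsto f(x;\theta)$, $\theta\in\Theta$, of the control system $\dot x=f(x;\theta(t))$ with piecewise constant controls). For $g\in\mathcal F$ and $t\ge0$, $\varphi^g_t$ denotes the time-$t$ flow map $x_0\mapsto x(t)$ of $\dot x=g(x)$, $x(0)=x_0$. Let $\Phi(\mathcal F,T)$ be the set of maps $\varphi^{f_k}_{t_k}\circ\cdots\circ\varphi^{f_1}_{t_1}$ with $k\ge1$, $f_1,\dots,f_k\in\mathcal F$, $t_i\ge0$, $t_1+\cdots+t_k=T$; set $\mathcal A_{\mathcal F,T}=\bigcup_{0\le t\le T}\Phi(\mathcal F,t)$ and $\mathcal A_{\mathcal F}=\bigcup_{T\ge0}\mathcal A_{\mathcal F,T}$ (the attainable set). $\mathcal F$ is affine invariant if $f\in\mathcal F$ implies $x\mapsto Wf(Ax-b)$ belongs to $\mathcal F$ for all $W,A\in\mathbb R^{d\times d}$, $b\in\mathbb R^d$. The system has the exact universal interpolation property if for every positive integer $N$ and every data $(x_1,y_1),\dots,(x_N,y_N)$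 in $\mathbb R^d\times\mathbb R^d$ with $x_i\ne x_j$ and $y_i\ne y_j$ for $i\ne j$, there is $\varphi\in\mathcal A_{\mathcal F}$ with $\varphi(x_i)=y_i$ for all $i$. *)

theory Defs
  imports "HOL-Analysis.Analysis"
begin

text \<open>Vectors in R^d are modelled as real^'n with d = CARD('n).\<close>

definition glob_lipschitz :: "(real^'n \<Rightarrow> real^'n) \<Rightarrow> bool" where
  "glob_lipschitz g \<longleftrightarrow> (\<exists>C. C-lipschitz_on UNIV g)"

text \<open>Time-t flow map of x' = g(x): the value at time t of the (for Lipschitz g unique)
  solution on [0,t] starting at x0.\<close>
definition flow :: "(real^'n \<Rightarrow> real^'n) \<Rightarrow> real \<Rightarrow> real^'n \<Rightarrow> real^'n" where
  "flow g t x0 = (THE y. \<exists>u. u 0 = x0 \<and> u t = y \<and>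
      (\<forall>s\<in>{0..t}. (u has_vector_derivative g (u s)) (at s within {0..t})))"

text \<open>Composition of flows: the list [(f1,t1),...,(fk,tk)] gives
  flow fk tk o ... o flow f1 t1.\<close>
fun comp_flows :: "((real^'n \<Rightarrow> real^'n) \<times> real) list \<Rightarrow> real^'n \<Rightarrow> real^'n" where
  "comp_flows [] = id"
| "comp_flows ((f, t) # ps) = comp_flows ps \<circ> flow f t"

definition Phi :: "(real^'n \<Rightarrow> real^'n) set \<Rightarrow> real \<Rightarrow> (real^'n \<Rightarrow> real^'n) set" where
  "Phi F T = {comp_flows ps | ps. ps \<noteq> [] \<and> (\<forall>(f, t) \<in> set ps. f \<in> F \<and> t \<ge> 0)
                \<and> sum_list (map snd ps) = T}"

definition attainable_T :: "(real^'n \<Rightarrow> real^'n) set \<Rightarrow> real \<Rightarrow> (real^'n \<Rightarrow> real^'n) set" where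
  "attainable_T F T = (\<Union>t\<in>{0..T}. Phi F t)"

definition attainable :: "(real^'n \<Rightarrow> real^'n) set \<Rightarrow> (real^'n \<Rightarrow> real^'n) set" where
  "attainable F = (\<Union>T\<in>{0..}. attainable_T F T)"

definition affine_invariant :: "(real^'n \<Rightarrow> real^'n) set \<Rightarrow> bool" where
  "affine_invariant F \<longleftrightarrow>
     (\<forall>f\<in>F. \<forall>W A :: real^'n^'n. \<forall>b. (\<lambda>x. W *v f (A *v x - b)) \<in> F)"

definition exact_universal_interpolation :: "(real^'n \<Rightarrow> real^'n) set \<Rightarrow> bool" where
  "exact_universal_interpolation F \<longleftrightarrow>
     (\<forall>N::nat. \<forall>xs ys :: nat \<Rightarrow> real^'n. N \<ge> 1 \<longrightarrow>
        inj_on xs {..<N} \<longrightarrow> inj_on ys {..<N} \<longrightarrow>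
        (\<exists>\<phi>\<in>attainable F. \<forall>i<N. \<phi> (xs i) = ys i))"

definition affine_scalar :: "(real^'n \<Rightarrow> real) \<Rightarrow> bool" where
  "affine_scalar h \<longleftrightarrow> (\<exists>a c. \<forall>x. h x = a \<bullet> x + c)"

end

theory Submission
  imports Defs
begin

(* If every component of every field in F is affine, each flow is an affine map (the linear
   system is solved by an exponential series), hence so is every attainable map, and no affine
   map sends 0, e, 2e to 0, e, 4e.

   Conversely, a non-affine component of some f in F is non-affine along some line, which gives
   a Lipschitz, non-affine h : R -> R.  Finite sums of functions s |-> c h(a s + b) interpolate
   arbitrary data on finite sets: otherwise some weights w annihilate all of them, and smoothing
   and differentiating in the dilation a lets one multiply w by any polynomial; this forces all
   higher difference quotients of h to vanish, so h would be affine.  By affine invariance F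
   contains the fields x |-> c h(alpha (a.x) + beta) v with a.v = 0, whose flows are shears
   x |-> x + t g(a.x) v.  Composing them moves the points of finitely many level sets of a.x by
   any prescribed displacements orthogonal to a, and three such maps, along a direction a that
   separates both the x_i and the y_i and along some b orthogonal to a (this is where d >= 2 is
   used), send the x_i to the y_i. *)

section \<open>Flows of Lipschitz fields\<close>

lemma inner_diff_le_lipschitz:
  fixes G :: "'a::real_inner \<Rightarrow> 'a"
  assumes "C-lipschitz_on UNIV G"
  shows "(x - y) \<bullet> (G x - G y) \<le> C * ((x - y) \<bullet> (x - y))"
proof -
  have "(x - y) \<bullet> (G x - G y) \<le> norm (x - y) * norm (G x - G y)"
    by (rule norm_cauchy_schwarz)
  also have "\<dots> \<le> norm (x - y) * (C * norm (x - y))"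
    using lipschitz_onD[OF assms, of x y] by (intro mult_left_mono) (auto simp: dist_norm)
  also have "\<dots> = C * ((x - y) \<bullet> (x - y))"
    by (simp add: dot_square_norm power2_eq_square)
  finally show ?thesis .
qed

lemma lipschitz_ode_unique:
  fixes G :: "'a::real_inner \<Rightarrow> 'a"
  assumes lip: "C-lipschitz_on UNIV G" and "0 \<le> t"
    and u1: "\<And>s. s \<in> {0..t} \<Longrightarrow> (u1 has_vector_derivative G (u1 s)) (at s within {0..t})"
    and u2: "\<And>s. s \<in> {0..t} \<Longrightarrow> (u2 has_vector_derivative G (u2 s)) (at s within {0..t})"
    and "u1 0 = u2 0"
  shows "u1 t = u2 t"
proof -
  define d where "d s = u1 s - u2 s" for s
  define D where "D s = G (u1 s) - G (u2 s)" for s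
  define \<phi> where "\<phi> s = exp (- 2 * C * s) * (d s \<bullet> d s)" for s
  define \<phi>' where "\<phi>' s = exp (- 2 * C * s) * (2 * (d s \<bullet> D s) - 2 * C * (d s \<bullet> d s))" for s
  have "(\<phi> has_real_derivative \<phi>' s) (at s within {0..t})" if "s \<in> {0..t}" for s
  proof -
    have "(d has_vector_derivative D s) (at s within {0..t})"
      unfolding d_def D_def using u1 u2 that by (intro derivative_intros)
    then have "((\<lambda>s. d s \<bullet> d s) has_real_derivative 2 * (d s \<bullet> D s)) (at s within {0..t})"
      unfolding has_vector_derivative_def has_field_derivative_def
      by (auto intro!: derivative_eq_intros simp: inner_commute fun_eq_iff algebra_simps)
    then show ?thesis
      unfolding \<phi>_def \<phi>'_def by (auto intro!: derivative_eq_intros simp: algebra_simps)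
  qed
  then obtain \<xi> where "\<phi> t - \<phi> 0 = \<phi>' \<xi> * (t - 0)"
    using mvt_very_simple[OF \<open>0 \<le> t\<close>, of \<phi> "\<lambda>s h. \<phi>' s * h"]
    by (auto simp: has_field_derivative_def mult_commute_abs)
  moreover have "\<phi>' s \<le> 0" for s
    using inner_diff_le_lipschitz[OF lip, of "u1 s" "u2 s"]
    by (simp add: \<phi>'_def d_def D_def mult_nonneg_nonpos)
  ultimately have "\<phi> t \<le> 0"
    using \<open>0 \<le> t\<close> \<open>u1 0 = u2 0\<close> by (simp add: \<phi>_def d_def mult_nonpos_nonneg)
  then have "d t \<bullet> d t = 0"
    using inner_ge_zero[of "d t"] by (simp add: \<phi>_def mult_le_0_iff)
  then show ?thesis
    by (simp add: d_def)
qed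

lemma flow_eqI:
  assumes lip: "C-lipschitz_on UNIV G" and "0 \<le> t" and "u 0 = x0"
    and u: "\<And>s. s \<in> {0..t} \<Longrightarrow> (u has_vector_derivative G (u s)) (at s within {0..t})"
  shows "flow G t x0 = u t"
  unfolding flow_def
proof (rule the_equality)
  show "\<exists>v. v 0 = x0 \<and> v t = u t \<and> (\<forall>s\<in>{0..t}. (v has_vector_derivative G (v s)) (at s within {0..t}))"
    using assms by blast
  show "y = u t" if "\<exists>v. v 0 = x0 \<and> v t = y \<and> (\<forall>s\<in>{0..t}. (v has_vector_derivative G (v s)) (at s within {0..t}))" for y
    using that lipschitz_ode_unique[OF lip \<open>0 \<le> t\<close> _ u] \<open>u 0 = x0\<close> by metis
qed

lemma flow_zero:
  assumes "C-lipschitz_on UNIV G"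
  shows "flow G 0 = id"
  using flow_eqI[OF assms, of 0 "\<lambda>_. x" x for x]
  by (auto simp: fun_eq_iff has_vector_derivative_def has_derivative_within_singleton_iff bounded_linear_scaleR_left)

section \<open>Flows of affine fields\<close>

lemma has_vector_derivative_series:
  fixes f :: "nat \<Rightarrow> real \<Rightarrow> 'a::banach"
  assumes "convex S"
    and "\<And>n x. x \<in> S \<Longrightarrow> (f n has_vector_derivative f' n x) (at x within S)"
    and "uniform_limit S (\<lambda>n x. \<Sum>i<n. f' i x) g' sequentially"
    and "x0 \<in> S" and "summable (\<lambda>n. f n x0)"
  shows "\<exists>g. \<forall>x\<in>S. (\<lambda>n. f n x) sums g x \<and> (g has_vector_derivative g' x) (at x within S)"
  unfolding has_vector_derivative_def
proof (rule has_derivative_series)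
  show "\<forall>\<^sub>F n in sequentially. \<forall>x\<in>S. \<forall>h. norm ((\<Sum>i<n. h *\<^sub>R f' i x) - h *\<^sub>R g' x) \<le> e * norm h"
    if "e > 0" for e
  proof -
    have "\<forall>\<^sub>F n in sequentially. \<forall>x\<in>S. dist (\<Sum>i<n. f' i x) (g' x) < e"
      using assms(3) \<open>e > 0\<close> unfolding uniform_limit_iff by blast
    then show ?thesis
    proof eventually_elim
      case (elim n)
      have "norm ((\<Sum>i<n. h *\<^sub>R f' i x) - h *\<^sub>R g' x) \<le> e * norm h" if "x \<in> S" for x h
      proof -
        have "norm ((\<Sum>i<n. h *\<^sub>R f' i x) - h *\<^sub>R g' x) = \<bar>h\<bar> * norm ((\<Sum>i<n. f' i x) - g' x)"
          by (simp add: scaleR_sum_right[symmetric] scaleR_diff_right[symmetric])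
        also have "\<dots> \<le> \<bar>h\<bar> * e"
          using elim that by (intro mult_left_mono) (auto simp: dist_norm)
        finally show ?thesis
          by (simp add: mult.commute)
      qed
      then show ?case by blast
    qed
  qed
qed (use assms in \<open>auto simp: has_vector_derivative_def summable_sums\<close>)

definition exp_series :: "('a::banach \<Rightarrow> 'a) \<Rightarrow> real \<Rightarrow> 'a \<Rightarrow> 'a" where
  "exp_series L t z = (\<Sum>k. (t ^ k / fact k) *\<^sub>R (L ^^ k) z)"

lemma norm_funpow_le:
  fixes L :: "'a::real_normed_vector \<Rightarrow> 'a"
  assumes "\<And>x. norm (L x) \<le> B * norm x" and "0 \<le> B"
  shows "norm ((L ^^ k) z) \<le> B ^ k * norm z"
proof (induction k)
  case (Suc k)
  have "norm ((L ^^ Suc k) z) \<le> B * norm ((L ^^ k) z)"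
    using assms(1) by simp
  also have "\<dots> \<le> B * (B ^ k * norm z)"
    using Suc \<open>0 \<le> B\<close> by (rule mult_left_mono)
  finally show ?case by simp
qed simp

lemma norm_exp_series_term_le:
  fixes L :: "'a::banach \<Rightarrow> 'a"
  assumes "\<And>x. norm (L x) \<le> B * norm x" and "0 \<le> B" and "\<bar>t\<bar> \<le> R"
  shows "norm ((t ^ k / fact k) *\<^sub>R (L ^^ k) z) \<le> (R * B) ^ k / fact k * norm z"
proof -
  have "norm ((t ^ k / fact k) *\<^sub>R (L ^^ k) z) = \<bar>t\<bar> ^ k / fact k * norm ((L ^^ k) z)"
    by (simp add: power_abs)
  also have "\<dots> \<le> R ^ k / fact k * (B ^ k * norm z)"
    using assms by (intro mult_mono divide_right_mono power_mono norm_funpow_le) auto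
  finally show ?thesis
    by (simp add: power_mult_distrib)
qed

lemma norm_exp_series_deriv_term_le:
  fixes L :: "'a::banach \<Rightarrow> 'a"
  assumes "\<And>x. norm (L x) \<le> B * norm x" and "0 \<le> B" and "\<bar>x\<bar> \<le> R" and "1 \<le> R"
  shows "norm ((real n * x ^ (n - 1) / fact n) *\<^sub>R (L ^^ n) z) \<le> (2 * R * B) ^ n / fact n * norm z"
proof -
  have "norm ((real n * x ^ (n - 1) / fact n) *\<^sub>R (L ^^ n) z)
      = real n * \<bar>x\<bar> ^ (n - 1) / fact n * norm ((L ^^ n) z)"
    by (simp add: power_abs abs_mult)
  also have "\<dots> \<le> real n * R ^ (n - 1) / fact n * (B ^ n * norm z)"
    using assms by (intro mult_mono divide_right_mono mult_left_mono power_mono norm_funpow_le) auto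
  also have "\<dots> \<le> 2 ^ n * R ^ n / fact n * (B ^ n * norm z)"
    using assms less_exp[of n]
    by (intro mult_right_mono divide_right_mono mult_mono power_increasing) auto
  finally show ?thesis
    by (simp add: power_mult_distrib)
qed

lemma summable_exp_bound: "summable (\<lambda>k. (c::real) ^ k / fact k * d)"
  using summable_mult2[OF summable_exp[of c], of d] by (simp add: field_simps)

lemma summable_exp_series:
  fixes L :: "'a::banach \<Rightarrow> 'a"
  assumes "bounded_linear L"
  shows "summable (\<lambda>k. (t ^ k / fact k) *\<^sub>R (L ^^ k) z)"
proof -
  obtain B where B: "\<And>x. norm (L x) \<le> B * norm x" "0 < B"
    using bounded_linear.pos_bounded[OF assms] by (auto simp: mult.commute)
  show ?thesis
    by (rule summable_comparison_test'[OF summable_exp_bound, of 0])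
      (use B norm_exp_series_term_le[of L B t "\<bar>t\<bar>"] in auto)
qed

lemma exp_series_zero [simp]: "exp_series L 0 z = z"
  unfolding exp_series_def
  using sums_unique[OF sums_finite[of "{0}" "\<lambda>k. ((0::real) ^ k / fact k) *\<^sub>R (L ^^ k) z"]]
  by simp

lemma linear_exp_series:
  fixes L :: "'a::banach \<Rightarrow> 'a"
  assumes "bounded_linear L"
  shows "linear (exp_series L t)"
proof (rule linearI)
  have lin: "linear (L ^^ k)" for k
    using assms by (induction k) (auto intro: linear_compose bounded_linear.linear linear_id)
  fix x y :: 'a and c :: real
  show "exp_series L t (x + y) = exp_series L t x + exp_series L t y"
    unfolding exp_series_def
    using suminf_add[OF summable_exp_series[OF assms, of t x] summable_exp_series[OF assms, of t y]]
    by (simp add: linear_add[OF lin] scaleR_add_right)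
  show "exp_series L t (c *\<^sub>R x) = c *\<^sub>R exp_series L t x"
    unfolding exp_series_def
    using suminf_scaleR_right[OF summable_exp_series[OF assms, of t x], of c]
    by (simp add: linear_scale[OF lin] scaleR_left_commute mult.commute)
qed

lemma exp_series_has_vector_derivative:
  fixes L :: "'a::banach \<Rightarrow> 'a"
  assumes L: "bounded_linear L"
  shows "((\<lambda>t. exp_series L t z) has_vector_derivative L (exp_series L t z)) (at t)"
proof -
  obtain B where B: "\<And>x. norm (L x) \<le> B * norm x" "0 < B"
    using bounded_linear.pos_bounded[OF L] by (auto simp: mult.commute)
  define R where "R = \<bar>t\<bar> + 1"
  define S where "S = ball (0::real) R"
  define f where "f n x = (x ^ n / fact n) *\<^sub>R (L ^^ n) z" for n x
  define f' where "f' n x = (of_nat n * x ^ (n - 1) / fact n) *\<^sub>R (L ^^ n) z" for n x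
  have "t \<in> S" "open S" "convex S"
    by (auto simp: S_def R_def)
  have "(f n has_vector_derivative f' n x) (at x within S)" for n x
    unfolding f_def f'_def by (auto intro!: derivative_eq_intros)
  moreover have "uniform_limit S (\<lambda>n x. \<Sum>i<n. f' i x) (\<lambda>x. \<Sum>i. f' i x) sequentially"
  proof (rule Weierstrass_m_test[OF _ summable_exp_bound])
    show "norm (f' n x) \<le> (2 * R * B) ^ n / fact n * norm z" if "x \<in> S" for n x
      unfolding f'_def using that B by (intro norm_exp_series_deriv_term_le) (auto simp: S_def R_def)
  qed
  moreover have "summable (\<lambda>n. f n t)"
    unfolding f_def by (rule summable_exp_series[OF L])
  ultimately obtain g where g: "\<forall>x\<in>S. (\<lambda>n. f n x) sums g x \<and>
      (g has_vector_derivative (\<Sum>i. f' i x)) (at x within S)"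
    using has_vector_derivative_series[OF \<open>convex S\<close> _ _ \<open>t \<in> S\<close>] by metis
  have "(g has_vector_derivative (\<Sum>i. f' i t)) (at t)"
    using g \<open>t \<in> S\<close> \<open>open S\<close> by (metis at_within_open)
  then have "((\<lambda>t. exp_series L t z) has_vector_derivative (\<Sum>i. f' i t)) (at t)"
    by (rule has_vector_derivative_transform_within_open[OF _ \<open>open S\<close> \<open>t \<in> S\<close>])
      (use g in \<open>auto simp: exp_series_def f_def sums_iff\<close>)
  moreover have "(\<lambda>i. f' (Suc i) t) sums L (exp_series L t z)"
    using bounded_linear.sums[OF L summable_sums[OF summable_exp_series[OF L]]]
    by (simp add: exp_series_def f'_def linear_scale[OF bounded_linear.linear[OF L]] del: of_nat_Suc)
  then have "(\<lambda>i. f' i t) sums L (exp_series L t z)"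
    by (subst (asm) sums_Suc_iff) (simp add: f'_def)
  then have "(\<Sum>i. f' i t) = L (exp_series L t z)"
    by (rule sums_unique[symmetric])
  ultimately show ?thesis by simp
qed

definition affine_map :: "('a::real_vector \<Rightarrow> 'b::real_vector) \<Rightarrow> bool" where
  "affine_map \<phi> \<longleftrightarrow> (\<forall>x y s. \<phi> ((1 - s) *\<^sub>R x + s *\<^sub>R y) = (1 - s) *\<^sub>R \<phi> x + s *\<^sub>R \<phi> y)"

lemma affine_map_comp: "affine_map \<phi> \<Longrightarrow> affine_map \<psi> \<Longrightarrow> affine_map (\<psi> \<circ> \<phi>)"
  by (simp add: affine_map_def)

lemma linear_affine_field:
  fixes f :: "real^'n \<Rightarrow> real^'m"
  assumes "\<forall>j. affine_scalar (\<lambda>x. f x $ j)"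
  shows "linear (\<lambda>x. f x - f 0)"
proof -
  obtain a c where "\<And>j x. f x $ j = a j \<bullet> x + c j"
    using assms unfolding affine_scalar_def by metis
  then show ?thesis
    by (intro linearI) (simp_all add: vec_eq_iff inner_add_right)
qed

text \<open>The affine field \<open>f\<close> becomes linear on \<open>real^'n \<times> real\<close>, and its flow is the restriction
  of the linear flow to the invariant hyperplane \<open>r = 1\<close>.\<close>

definition affine_lift :: "(real^'n \<Rightarrow> real^'n) \<Rightarrow> (real^'n) \<times> real \<Rightarrow> (real^'n) \<times> real" where
  "affine_lift f p = (f (fst p) - f 0 + snd p *\<^sub>R f 0, 0)"

lemma bounded_linear_affine_lift:
  assumes "\<forall>j. affine_scalar (\<lambda>x. f x $ j)"
  shows "bounded_linear (affine_lift f)"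
proof -
  have A: "linear (\<lambda>x. f x - f 0)"
    by (rule linear_affine_field[OF assms])
  have "linear (affine_lift f)"
    by (intro linearI) (simp_all add: affine_lift_def linear_add[OF A, simplified]
        linear_scale[OF A, simplified] algebra_simps)
  then show ?thesis
    by (simp add: linear_conv_bounded_linear)
qed

lemma flow_affine_field:
  fixes f :: "real^'n \<Rightarrow> real^'n"
  assumes "\<forall>j. affine_scalar (\<lambda>x. f x $ j)" and lip: "C-lipschitz_on UNIV f" and "0 \<le> t"
  shows "flow f t x = fst (exp_series (affine_lift f) t (x, 1))"
proof -
  define u where "u s = exp_series (affine_lift f) s (x, 1)" for s
  have du: "(u has_vector_derivative affine_lift f (u s)) (at s)" for s
    unfolding u_def by (rule exp_series_has_vector_derivative[OF bounded_linear_affine_lift[OF assms(1)]])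
  have "((\<lambda>s. snd (u s)) has_derivative (\<lambda>_. 0)) (at s within UNIV)" for s
    using bounded_linear.has_vector_derivative[OF bounded_linear_snd du[of s]]
    by (simp add: has_vector_derivative_def affine_lift_def)
  from has_derivative_zero_constant[OF convex_UNIV this] have "snd (u s) = snd (u 0)" for s
    by (metis UNIV_I)
  then have "snd (u s) = 1" for s
    by (simp add: u_def)
  then have "((\<lambda>s. fst (u s)) has_vector_derivative f (fst (u s))) (at s within {0..t})" for s
    using bounded_linear.has_vector_derivative[OF bounded_linear_fst du[of s]]
    by (simp add: has_vector_derivative_at_within affine_lift_def)
  then show ?thesis
    using flow_eqI[OF lip \<open>0 \<le> t\<close>, of "\<lambda>s. fst (u s)"] by (simp add: u_def)
qed

lemma affine_map_flow:
  fixes f :: "real^'n \<Rightarrow> real^'n"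
  assumes "\<forall>j. affine_scalar (\<lambda>x. f x $ j)" and "C-lipschitz_on UNIV f" and "0 \<le> t"
  shows "affine_map (flow f t)"
  unfolding affine_map_def flow_affine_field[OF assms]
proof (intro allI)
  fix x y :: "real^'n" and s :: real
  have E: "linear (exp_series (affine_lift f) t)"
    by (rule linear_exp_series[OF bounded_linear_affine_lift[OF assms(1)]])
  have "((1 - s) *\<^sub>R x + s *\<^sub>R y, 1::real) = (1 - s) *\<^sub>R (x, 1) + s *\<^sub>R (y, 1)"
    by (simp add: algebra_simps)
  then show "fst (exp_series (affine_lift f) t ((1 - s) *\<^sub>R x + s *\<^sub>R y, 1))
      = (1 - s) *\<^sub>R fst (exp_series (affine_lift f) t (x, 1))
        + s *\<^sub>R fst (exp_series (affine_lift f) t (y, 1))"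
    by (simp only: linear_add[OF E] linear_scale[OF E] fst_add fst_scaleR)
qed

section \<open>Attainable maps\<close>

lemma comp_flows_Cons: "comp_flows (p # ps) = comp_flows ps \<circ> flow (fst p) (snd p)"
  by (cases p) simp

lemma comp_flows_append: "comp_flows (ps @ qs) = comp_flows qs \<circ> comp_flows ps"
  by (induction ps) (simp_all add: comp_flows_Cons o_assoc)

lemma attainable_iff:
  "\<phi> \<in> attainable F \<longleftrightarrow>
    (\<exists>ps. ps \<noteq> [] \<and> (\<forall>(f, t) \<in> set ps. f \<in> F \<and> 0 \<le> t) \<and> \<phi> = comp_flows ps)"
proof
  assume "\<exists>ps. ps \<noteq> [] \<and> (\<forall>(f, t) \<in> set ps. f \<in> F \<and> 0 \<le> t) \<and> \<phi> = comp_flows ps"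
  then obtain ps where ps: "ps \<noteq> []" "\<forall>(f, t) \<in> set ps. f \<in> F \<and> 0 \<le> t" "\<phi> = comp_flows ps"
    by blast
  have "0 \<le> sum_list (map snd ps)"
    using ps(2) by (intro sum_list_nonneg) auto
  then show "\<phi> \<in> attainable F"
    using ps unfolding attainable_def attainable_T_def Phi_def by fastforce
qed (auto simp: attainable_def attainable_T_def Phi_def)

lemma flow_attainable: "f \<in> F \<Longrightarrow> 0 \<le> t \<Longrightarrow> flow f t \<in> attainable F"
  unfolding attainable_iff by (intro exI[of _ "[(f, t)]"]) auto

lemma attainable_comp:
  assumes "\<phi> \<in> attainable F" and "\<psi> \<in> attainable F"
  shows "\<psi> \<circ> \<phi> \<in> attainable F"
proof -
  obtain ps qs where "ps \<noteq> []" "\<forall>(f, t) \<in> set ps. f \<in> F \<and> 0 \<le> t" "\<phi> = comp_flows ps"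
    and "\<forall>(f, t) \<in> set qs. f \<in> F \<and> 0 \<le> t" "\<psi> = comp_flows qs"
    using assms unfolding attainable_iff by metis
  then show ?thesis
    unfolding attainable_iff by (intro exI[of _ "ps @ qs"]) (auto simp: comp_flows_append)
qed

lemma attainable_induct [consumes 1, case_names flow comp]:
  assumes "\<phi> \<in> attainable F"
    and flow: "\<And>f t. f \<in> F \<Longrightarrow> 0 \<le> t \<Longrightarrow> P (flow f t)"
    and comp: "\<And>\<phi> \<psi>. P \<phi> \<Longrightarrow> P \<psi> \<Longrightarrow> P (\<psi> \<circ> \<phi>)"
  shows "P \<phi>"
proof -
  have "P (comp_flows ps)" if "ps \<noteq> []" "\<forall>(f, t) \<in> set ps. f \<in> F \<and> 0 \<le> t" for ps
    using that
  proof (induction ps)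
    case (Cons p ps)
    then have "P (flow (fst p) (snd p))"
      by (intro flow) (auto split: prod.splits)
    then show ?case
    proof (cases "ps = []")
      case False
      then have "P (comp_flows ps)"
        using Cons by simp
      then show ?thesis
        unfolding comp_flows_Cons by (rule comp[OF \<open>P (flow (fst p) (snd p))\<close>])
    qed (simp add: comp_flows_Cons)
  qed simp
  then show ?thesis
    using assms(1) unfolding attainable_iff by blast
qed

lemma affine_map_attainable:
  assumes "\<forall>g\<in>F. glob_lipschitz g" and "\<forall>f\<in>F. \<forall>j. affine_scalar (\<lambda>x. f x $ j)"
    and "\<phi> \<in> attainable F"
  shows "affine_map \<phi>"
  using assms(3)
proof (induction rule: attainable_induct)
  case (flow f t)
  then show ?case
    using assms(1,2) affine_map_flow unfolding glob_lipschitz_def by blast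
qed (rule affine_map_comp)

lemma not_exact_universal_interpolation_if_affine:
  fixes F :: "(real^'n \<Rightarrow> real^'n) set"
  assumes "\<forall>\<phi>\<in>attainable F. affine_map \<phi>"
  shows "\<not> exact_universal_interpolation F"
proof
  define e :: "real^'n" where "e = 1"
  define xs where "xs i = real i *\<^sub>R e" for i
  define ys where "ys i = real (i ^ 2) *\<^sub>R e" for i
  have "e \<noteq> 0"
    by (simp add: e_def vec_eq_iff)
  then have "inj_on xs {..<3}" "inj_on ys {..<3}"
    by (auto simp: inj_on_def xs_def ys_def less_Suc_eq numeral_3_eq_3)
  moreover assume "exact_universal_interpolation F"
  ultimately obtain \<phi> where "\<phi> \<in> attainable F" and \<phi>: "\<forall>i<3. \<phi> (xs i) = ys i"
    unfolding exact_universal_interpolation_def by (metis one_le_numeral)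
  then have "affine_map \<phi>"
    using assms by blast
  then have "\<phi> ((1 - 2) *\<^sub>R xs 0 + 2 *\<^sub>R xs 1) = (1 - 2) *\<^sub>R \<phi> (xs 0) + (2::real) *\<^sub>R \<phi> (xs 1)"
    unfolding affine_map_def by blast
  moreover have "(1 - 2) *\<^sub>R xs 0 + (2::real) *\<^sub>R xs 1 = xs 2"
    by (simp add: xs_def)
  ultimately have "ys 2 = 2 *\<^sub>R ys 1 - ys 0"
    using \<phi> by simp
  then show False
    using \<open>e \<noteq> 0\<close> by (simp add: ys_def scaleR_cancel_right)
qed

lemma exact_universal_interpolation_imp_nonaffine:
  assumes "\<forall>g\<in>F. glob_lipschitz g" and "exact_universal_interpolation F"
  shows "\<exists>f\<in>F. \<exists>j. \<not> affine_scalar (\<lambda>x. f x $ j)"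
  using not_exact_universal_interpolation_if_affine affine_map_attainable assms by blast

section \<open>Reparametrisations of a non-affine Lipschitz function\<close>

definition affine_fun :: "(real \<Rightarrow> real) \<Rightarrow> bool" where
  "affine_fun f \<longleftrightarrow> (\<exists>a c. \<forall>x. f x = a * x + c)"

definition diff_quot :: "real \<Rightarrow> (real \<Rightarrow> real) \<Rightarrow> real \<Rightarrow> real" where
  "diff_quot e f x = (f (x + e) - f x) / e"

definition local_mean :: "real \<Rightarrow> (real \<Rightarrow> real) \<Rightarrow> real \<Rightarrow> real" where
  "local_mean e f x = integral {0..e} (\<lambda>u. f (x + u)) / e"

definition annihilates :: "real set \<Rightarrow> (real \<Rightarrow> real) \<Rightarrow> (real \<Rightarrow> real) \<Rightarrow> bool" where
  "annihilates T w f \<longleftrightarrow> (\<forall>a b. (\<Sum>t\<in>T. w t * f (a * t + b)) = 0)"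

lemma continuous_on_diff_quot:
  "continuous_on UNIV f \<Longrightarrow> continuous_on UNIV (diff_quot e f)"
proof -
  assume f: "continuous_on UNIV f"
  have "continuous_on UNIV (\<lambda>x. f (x + e))"
    by (rule continuous_on_compose2[OF f]) (auto intro!: continuous_intros)
  then show ?thesis
    unfolding diff_quot_def divide_inverse by (intro continuous_intros f)
qed

lemma abs_diff_quot_le:
  assumes "C-lipschitz_on UNIV f" and "e \<noteq> 0"
  shows "\<bar>diff_quot e f x\<bar> \<le> C"
  using lipschitz_onD[OF assms(1), of "x + e" x] assms(2)
  by (simp add: diff_quot_def dist_real_def abs_divide divide_le_eq)

lemma lipschitz_diff_quot:
  assumes "C-lipschitz_on UNIV f" and "e \<noteq> 0"
  shows "(2 * C / \<bar>e\<bar>)-lipschitz_on UNIV (diff_quot e f)"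
proof (rule lipschitz_onI)
  show "0 \<le> 2 * C / \<bar>e\<bar>"
    using lipschitz_on_nonneg[OF assms(1)] by simp
  fix x y :: real
  have "\<bar>diff_quot e f x - diff_quot e f y\<bar> = \<bar>(f (x + e) - f (y + e)) - (f x - f y)\<bar> / \<bar>e\<bar>"
    by (simp add: diff_quot_def diff_divide_distrib[symmetric] abs_divide algebra_simps)
  also have "\<dots> \<le> (\<bar>f (x + e) - f (y + e)\<bar> + \<bar>f x - f y\<bar>) / \<bar>e\<bar>"
    by (intro divide_right_mono abs_triangle_ineq4) simp
  also have "\<dots> \<le> (C * \<bar>x - y\<bar> + C * \<bar>x - y\<bar>) / \<bar>e\<bar>"
    using lipschitz_onD[OF assms(1), of "x + e" "y + e"] lipschitz_onD[OF assms(1), of x y]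
    by (intro divide_right_mono add_mono) (auto simp: dist_real_def)
  finally show "dist (diff_quot e f x) (diff_quot e f y) \<le> 2 * C / \<bar>e\<bar> * dist x y"
    by (simp add: dist_real_def field_simps)
qed

lemma local_mean_eq: "local_mean e f x = integral {x..x + e} f / e"
  using integral_shift_real_ivl[of x x "x + e" f] by (simp add: local_mean_def add.commute)

lemma local_mean_has_real_derivative:
  assumes f: "continuous_on UNIV f" and "0 < e"
  shows "(local_mean e f has_real_derivative diff_quot e f x) (at x)"
proof -
  define G where "G y = integral {x - 1..y} f" for y
  have G: "(G has_real_derivative f y) (at y)" if "x - 1 < y" "y < x + e + 1" for y
    unfolding G_def
    using integral_has_real_derivative[OF continuous_on_subset[OF f], of "x - 1" "x + e + 1" y] that
    by (auto simp: at_within_Icc_at)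
  have "((\<lambda>y. G (y + e)) has_real_derivative f (x + e) * 1) (at x)"
    using \<open>0 < e\<close> by (intro DERIV_chain2[of G] G derivative_eq_intros) auto
  then have "((\<lambda>y. (G (y + e) - G y) / e) has_real_derivative diff_quot e f x) (at x)"
    unfolding diff_quot_def using \<open>0 < e\<close> by (intro DERIV_cdivide DERIV_diff G) auto
  then show ?thesis
  proof (rule has_field_derivative_transform_within_open[where S = "{x - 1<..<x + 1}"])
    fix y assume y: "y \<in> {x - 1<..<x + 1}"
    have "integral {x - 1..y} f + integral {y..y + e} f = integral {x - 1..y + e} f"
      using y \<open>0 < e\<close>
      by (intro Henstock_Kurzweil_Integration.integral_combine integrable_continuous_real
          continuous_on_subset[OF f]) auto
    then show "(G (y + e) - G y) / e = local_mean e f y"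
      by (simp add: local_mean_eq G_def algebra_simps)
  qed auto
qed

lemma annihilates_diff_quot:
  assumes "annihilates T w f"
  shows "annihilates T w (diff_quot e f)"
  unfolding annihilates_def
proof (intro allI)
  fix a b
  have "(\<Sum>t\<in>T. w t * diff_quot e f (a * t + b))
      = ((\<Sum>t\<in>T. w t * f (a * t + (b + e))) - (\<Sum>t\<in>T. w t * f (a * t + b))) / e"
    by (simp add: diff_quot_def sum_divide_distrib[symmetric] sum_subtractf[symmetric] algebra_simps)
  then show "(\<Sum>t\<in>T. w t * diff_quot e f (a * t + b)) = 0"
    using assms by (simp add: annihilates_def)
qed

lemma annihilates_local_mean:
  assumes f: "continuous_on UNIV f" and "finite T" and "annihilates T w f"
  shows "annihilates T w (local_mean e f)"
  unfolding annihilates_def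
proof (intro allI)
  fix a b
  have "(\<lambda>u. w t * f (a * t + b + u)) integrable_on {0..e}" for t
    by (intro integrable_continuous_real continuous_on_mult_left
        continuous_on_compose2[OF f] continuous_intros) auto
  then have "(\<Sum>t\<in>T. w t * local_mean e f (a * t + b))
      = integral {0..e} (\<lambda>u. \<Sum>t\<in>T. w t * f (a * t + (b + u))) / e"
    by (simp add: local_mean_def sum_divide_distrib integral_sum[OF \<open>finite T\<close>] add.assoc)
  also have "\<dots> = 0"
    using assms(3) by (simp add: annihilates_def)
  finally show "(\<Sum>t\<in>T. w t * local_mean e f (a * t + b)) = 0" .
qed

text \<open>Differentiating the annihilation identity of the smoothed function \<open>local_mean e f\<close>
  with respect to the dilation parameter multiplies the weights by \<open>t\<close>.\<close>

lemma annihilates_diff_quot_mult: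
  assumes f: "continuous_on UNIV f" and "finite T" and ann: "annihilates T w f" and "0 < e"
  shows "annihilates T (\<lambda>t. w t * (t - c)) (diff_quot e f)"
proof -
  have weighted: "(\<Sum>t\<in>T. w t * t * diff_quot e f (a * t + b)) = 0" for a b
  proof -
    have "((\<lambda>a. \<Sum>t\<in>T. w t * local_mean e f (a * t + b)) has_real_derivative
        (\<Sum>t\<in>T. w t * (diff_quot e f (a * t + b) * t))) (at a)"
      by (intro DERIV_sum DERIV_cmult DERIV_chain2[OF local_mean_has_real_derivative[OF f \<open>0 < e\<close>]]
          derivative_eq_intros) auto
    moreover have "(\<lambda>a. \<Sum>t\<in>T. w t * local_mean e f (a * t + b)) = (\<lambda>_. 0)"
      using annihilates_local_mean[OF f \<open>finite T\<close> ann] by (simp add: annihilates_def)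
    ultimately show ?thesis
      using DERIV_unique[OF _ DERIV_const] by (simp add: mult_ac)
  qed
  show ?thesis
    using weighted annihilates_diff_quot[OF ann, of e]
    by (simp add: annihilates_def algebra_simps sum_subtractf sum_distrib_left[symmetric])
qed

fun diff_quots :: "real list \<Rightarrow> (real \<Rightarrow> real) \<Rightarrow> real \<Rightarrow> real" where
  "diff_quots [] f = f"
| "diff_quots (e # es) f = diff_quot e (diff_quots es f)"

lemma diff_quots_snoc: "diff_quots (es @ [e]) f = diff_quots es (diff_quot e f)"
  by (induction es) auto

lemma continuous_on_diff_quots:
  "continuous_on UNIV f \<Longrightarrow> continuous_on UNIV (diff_quots es f)"
  by (induction es) (auto intro: continuous_on_diff_quot)

lemma annihilates_diff_quots_prod:
  assumes f: "continuous_on UNIV f" and "finite T" and "annihilates T w f"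
    and "length es = length cs" and "\<forall>e\<in>set es. 0 < e"
  shows "annihilates T (\<lambda>t. w t * (\<Prod>c\<leftarrow>cs. t - c)) (diff_quots es f)"
  using assms(4,5)
proof (induction cs arbitrary: es)
  case (Cons c cs)
  then obtain e es' where es: "es = e # es'"
    by (cases es) auto
  with Cons have "annihilates T (\<lambda>t. w t * (\<Prod>c\<leftarrow>cs. t - c)) (diff_quots es' f)"
    by simp
  from annihilates_diff_quot_mult[OF continuous_on_diff_quots[OF f] \<open>finite T\<close> this, of e c]
  show ?case
    using Cons.prems by (simp add: es mult_ac)
qed (simp add: assms(3))

lemma affine_fun_const_if_bounded:
  assumes "affine_fun g" and "\<And>x. \<bar>g x\<bar> \<le> B"
  shows "g x = g 0"
proof -
  obtain a c where g: "\<And>x. g x = a * x + c"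
    using assms(1) unfolding affine_fun_def by blast
  have "a = 0"
  proof (rule ccontr)
    assume "a \<noteq> 0"
    then have "\<bar>g ((B + \<bar>c\<bar> + 1) / a)\<bar> > B"
      by (simp add: g)
    with assms(2) show False
      by (simp add: not_le[symmetric])
  qed
  then show ?thesis
    by (simp add: g)
qed

lemma local_mean_one_if_increments_const:
  assumes f: "continuous_on UNIV f" and incr: "\<And>e x. 0 < e \<Longrightarrow> f (x + e) - f x = f e - f 0"
  shows "local_mean 1 f x = local_mean 1 f 0 + (f x - f 0)"
proof -
  have "integral {0..1} (\<lambda>u. f (x + u)) = integral {0..1} (\<lambda>u. f u + (f x - f 0))"
  proof (rule integral_cong)
    show "f (x + u) = f u + (f x - f 0)" if "u \<in> {0..1}" for u
      using incr[of u x] that by (cases "u = 0") (auto simp: add.commute)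
  qed
  also have "\<dots> = integral {0..1} f + integral {0..1} (\<lambda>u::real. f x - f 0)"
    by (intro Henstock_Kurzweil_Integration.integral_add integrable_continuous_real
        continuous_on_subset[OF f] continuous_on_const) auto
  finally show ?thesis
    by (simp add: local_mean_def)
qed

lemma affine_fun_if_increments_const:
  assumes f: "continuous_on UNIV f" and incr: "\<And>e x. 0 < e \<Longrightarrow> f (x + e) - f x = f e - f 0"
  shows "affine_fun f"
proof -
  have "((\<lambda>x. local_mean 1 f x - (f 1 - f 0) * x) has_real_derivative 0) (at x)" for x
  proof -
    have "((\<lambda>x. local_mean 1 f x - (f 1 - f 0) * x) has_real_derivative
        diff_quot 1 f x - (f 1 - f 0) * 1) (at x)"
      by (intro DERIV_diff local_mean_has_real_derivative[OF f] DERIV_cmult DERIV_ident) simp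
    then show ?thesis
      using incr[of 1 x] by (simp add: diff_quot_def)
  qed
  then have const: "local_mean 1 f x - (f 1 - f 0) * x = local_mean 1 f 0 - (f 1 - f 0) * 0" for x
    by (intro DERIV_isconst_all allI)
  have "f x = (f 1 - f 0) * x + f 0" for x
    using const[of x] local_mean_one_if_increments_const[OF f incr, of x] by linarith
  then show ?thesis
    unfolding affine_fun_def by blast
qed

text \<open>By induction each \<open>diff_quot e f\<close> is affine; being bounded by the Lipschitz
  constant, it is constant.\<close>

lemma affine_fun_if_diff_quots_vanish:
  assumes "C-lipschitz_on UNIV f"
    and "\<And>es. length es = k \<Longrightarrow> \<forall>e\<in>set es. 0 < e \<Longrightarrow> diff_quots es f = (\<lambda>_. 0)"
  shows "affine_fun f"
  using assms
proof (induction k arbitrary: f C)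
  case 0
  then show ?case
    using "0.prems"(2)[of "[]"] by (auto simp: affine_fun_def intro!: exI[of _ 0])
next
  case (Suc k)
  have "f (x + e) - f x = f e - f 0" if "0 < e" for e x
  proof -
    have "affine_fun (diff_quot e f)"
    proof (rule Suc.IH)
      show "(2 * C / \<bar>e\<bar>)-lipschitz_on UNIV (diff_quot e f)"
        by (rule lipschitz_diff_quot[OF Suc.prems(1)]) (use \<open>0 < e\<close> in simp)
      show "diff_quots es (diff_quot e f) = (\<lambda>_. 0)" if "length es = k" "\<forall>e\<in>set es. 0 < e" for es
        using Suc.prems(2)[of "es @ [e]"] that \<open>0 < e\<close> by (simp add: diff_quots_snoc)
    qed
    then have "diff_quot e f x = diff_quot e f 0"
      using abs_diff_quot_le[OF Suc.prems(1)] \<open>0 < e\<close>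
      by (intro affine_fun_const_if_bounded[where B = C]) simp_all
    then show ?thesis
      using \<open>0 < e\<close> by (simp add: diff_quot_def)
  qed
  then show ?case
    using affine_fun_if_increments_const lipschitz_on_continuous_on[OF Suc.prems(1)] by blast
qed

text \<open>With \<open>w t\<^sub>0 \<noteq> 0\<close>, multiplying the weights by the polynomial vanishing on \<open>T - {t\<^sub>0}\<close>
  leaves a single term, so all difference quotients of the corresponding order vanish.\<close>

lemma affine_fun_if_annihilated:
  assumes lip: "C-lipschitz_on UNIV h" and "finite T" and "t0 \<in> T"
    and ann: "annihilates T w h" and "w t0 \<noteq> 0"
  shows "affine_fun h"
proof -
  define cs where "cs = sorted_list_of_set (T - {t0})"
  have "diff_quots es h = (\<lambda>_. 0)" if "length es = length cs" "\<forall>e\<in>set es. 0 < e" for es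
  proof
    fix x
    define P where "P t = (\<Prod>c\<leftarrow>cs. t - c)" for t
    have "P t = 0" if "t \<in> T - {t0}" for t
      using that \<open>finite T\<close> by (simp add: P_def cs_def prod_list_zero_iff)
    then have "(\<Sum>t\<in>T. w t * P t * diff_quots es h (0 * t + x)) = w t0 * P t0 * diff_quots es h x"
      using \<open>finite T\<close> \<open>t0 \<in> T\<close> by (simp add: sum.remove)
    moreover have "(\<Sum>t\<in>T. w t * P t * diff_quots es h (0 * t + x)) = 0"
      using annihilates_diff_quots_prod[OF lipschitz_on_continuous_on[OF lip] \<open>finite T\<close> ann that]
      unfolding annihilates_def P_def by blast
    moreover have "P t0 \<noteq> 0"
      using \<open>finite T\<close> by (auto simp: P_def cs_def prod_list_zero_iff)
    ultimately show "diff_quots es h x = 0"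
      using \<open>w t0 \<noteq> 0\<close> by simp
  qed
  then show ?thesis
    by (rule affine_fun_if_diff_quots_vanish[OF lip])
qed

inductive_set reparam_span :: "(real \<Rightarrow> real) \<Rightarrow> (real \<Rightarrow> real) set" for h where
  reparam: "(\<lambda>s. c * h (a * s + b)) \<in> reparam_span h"
| add: "H1 \<in> reparam_span h \<Longrightarrow> H2 \<in> reparam_span h \<Longrightarrow> (\<lambda>s. H1 s + H2 s) \<in> reparam_span h"

lemma reparam_span_zero: "(\<lambda>_. 0) \<in> reparam_span h"
  using reparam_span.reparam[of 0 h 0 0] by simp

lemma reparam_span_cmult: "H \<in> reparam_span h \<Longrightarrow> (\<lambda>s. r * H s) \<in> reparam_span h"
proof (induction rule: reparam_span.induct)
  case (reparam c a b)
  then show ?case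
    using reparam_span.reparam[of "r * c" h a b] by (simp add: mult.assoc)
next
  case (add H1 H2)
  then show ?case
    using reparam_span.add by (simp add: distrib_left)
qed

lemma reparam_span_sum:
  "finite I \<Longrightarrow> (\<And>i. i \<in> I \<Longrightarrow> B i \<in> reparam_span h) \<Longrightarrow> (\<lambda>s. \<Sum>i\<in>I. B i s) \<in> reparam_span h"
  by (induction I rule: finite_induct) (auto intro: reparam_span_zero reparam_span.add)

lemma reparam_span_value_eq_combination:
  assumes "finite T"
    and B: "\<And>t. B t \<in> reparam_span h" "\<And>t s. s \<in> T \<Longrightarrow> B t s = (if s = t then 1 else 0)"
    and not_sep: "\<And>K. K \<in> reparam_span h \<Longrightarrow> \<forall>t\<in>T. K t = 0 \<Longrightarrow> K t0 = 0"
    and "H \<in> reparam_span h"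
  shows "H t0 = (\<Sum>t\<in>T. H t * B t t0)"
proof -
  define K where "K s = H s + (-1) * (\<Sum>t\<in>T. H t * B t s)" for s
  have "(\<lambda>s. \<Sum>t\<in>T. H t * B t s) \<in> reparam_span h"
    using \<open>finite T\<close> reparam_span_cmult[OF B(1)] by (rule reparam_span_sum)
  then have "K \<in> reparam_span h"
    unfolding K_def by (intro reparam_span.add \<open>H \<in> reparam_span h\<close> reparam_span_cmult)
  moreover have "K s = 0" if "s \<in> T" for s
  proof -
    have "(\<Sum>t\<in>T. H t * B t s) = (\<Sum>t\<in>T. if t = s then H t else 0)"
      using that by (intro sum.cong) (auto simp: B(2))
    then show ?thesis
      using that \<open>finite T\<close> by (simp add: K_def)
  qed
  ultimately have "K t0 = 0"
    using not_sep by blast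
  then show ?thesis
    by (simp add: K_def)
qed

lemma annihilator_if_not_separating:
  assumes "finite T" and "t0 \<notin> T"
    and interp: "\<And>z. \<exists>H\<in>reparam_span h. \<forall>t\<in>T. H t = z t"
    and not_sep: "\<And>K. K \<in> reparam_span h \<Longrightarrow> \<forall>t\<in>T. K t = 0 \<Longrightarrow> K t0 = 0"
  shows "\<exists>w. w t0 = 1 \<and> annihilates (insert t0 T) w h"
proof -
  have "\<forall>t. \<exists>H\<in>reparam_span h. \<forall>s\<in>T. H s = (if s = t then 1 else 0)"
    by (intro allI interp)
  then obtain B where B: "\<And>t. B t \<in> reparam_span h" "\<And>t s. s \<in> T \<Longrightarrow> B t s = (if s = t then 1 else 0)"
    by metis
  define w where "w t = (if t = t0 then 1 else - B t t0)" for t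
  have "annihilates (insert t0 T) w h"
    unfolding annihilates_def
  proof (intro allI)
    fix a b
    have "(\<Sum>t\<in>insert t0 T. w t * h (a * t + b))
        = h (a * t0 + b) - (\<Sum>t\<in>T. h (a * t + b) * B t t0)"
      using \<open>finite T\<close> \<open>t0 \<notin> T\<close>
      by (simp add: w_def sum_negf[symmetric] mult.commute) (intro sum.cong; auto)
    also have "\<dots> = 0"
      using reparam_span_value_eq_combination[OF \<open>finite T\<close> B not_sep reparam_span.reparam[of 1 h a b]]
      by simp
    finally show "(\<Sum>t\<in>insert t0 T. w t * h (a * t + b)) = 0" .
  qed
  then show ?thesis
    by (intro exI[of _ w]) (simp add: w_def)
qed

lemma reparam_span_interpolates:
  assumes lip: "C-lipschitz_on UNIV h" and "\<not> affine_fun h" and "finite T"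
  shows "\<exists>H\<in>reparam_span h. \<forall>t\<in>T. H t = z t"
  using \<open>finite T\<close>
proof (induction T arbitrary: z rule: finite_induct)
  case empty
  then show ?case
    using reparam_span_zero by blast
next
  case (insert t0 T)
  show ?case
  proof (cases "\<exists>K\<in>reparam_span h. (\<forall>t\<in>T. K t = 0) \<and> K t0 \<noteq> 0")
    case True
    then obtain K where K: "K \<in> reparam_span h" "\<forall>t\<in>T. K t = 0" "K t0 \<noteq> 0"
      by blast
    obtain H where H: "H \<in> reparam_span h" "\<forall>t\<in>T. H t = z t"
      using insert.IH by blast
    define H' where "H' s = H s + ((z t0 - H t0) / K t0) * K s" for s
    have "H' \<in> reparam_span h"
      unfolding H'_def by (intro reparam_span.add H reparam_span_cmult K)
    moreover have "\<forall>t\<in>insert t0 T. H' t = z t"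
      using H K by (auto simp: H'_def)
    ultimately show ?thesis
      by blast
  next
    case False
    then obtain w where "w t0 = 1" "annihilates (insert t0 T) w h"
      using annihilator_if_not_separating[OF insert.hyps insert.IH] by blast
    then have "affine_fun h"
      using insert.hyps(1) by (intro affine_fun_if_annihilated[OF lip, of "insert t0 T" t0 w]) simp_all
    with \<open>\<not> affine_fun h\<close> show ?thesis ..
  qed
qed

section \<open>Shears\<close>

lemma linear_functional_eq_inner:
  fixes L :: "'a::euclidean_space \<Rightarrow> real"
  assumes "linear L"
  shows "L x = adjoint L 1 \<bullet> x"
  using adjoint_works[OF assms, of x 1] by (simp add: inner_commute)

lemma nonaffine_on_line:
  fixes F :: "real^'n \<Rightarrow> real"
  assumes "\<not> affine_scalar F"
  obtains u b0 where "\<not> affine_fun (\<lambda>s. F (s *\<^sub>R u - b0))"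
proof -
  have False if lines: "\<And>u b0. affine_fun (\<lambda>s. F (s *\<^sub>R u - b0))"
  proof -
    have line: "F ((1 - s) *\<^sub>R x + s *\<^sub>R y) = (1 - s) * F x + s * F y" for x y s
    proof -
      obtain \<alpha> \<gamma> where "\<And>s. F (s *\<^sub>R (y - x) - (- x)) = \<alpha> * s + \<gamma>"
        using lines[of "y - x" "- x"] unfolding affine_fun_def by blast
      from this[of 0] this[of 1] this[of s] show ?thesis
        by (simp add: algebra_simps)
    qed
    define L where "L x = F x - F 0" for x
    have scale: "L (s *\<^sub>R x) = s * L x" for s x
      using line[of s 0 x] by (simp add: L_def algebra_simps)
    have "L (x + y) = 2 * L ((1/2) *\<^sub>R x + (1/2) *\<^sub>R y)" for x y
      using scale[of 2 "(1/2) *\<^sub>R x + (1/2) *\<^sub>R y"] by (simp add: scaleR_add_right)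
    then have add: "L (x + y) = L x + L y" for x y
      using line[of "1/2" x y] by (simp add: L_def algebra_simps)
    have "linear L"
      by (intro linearI) (simp_all add: add scale)
    then have "F x = adjoint L 1 \<bullet> x + F 0" for x
      using linear_functional_eq_inner[of L x] by (simp add: L_def)
    with assms show False
      unfolding affine_scalar_def by blast
  qed
  then show thesis
    using that by blast
qed

lemma lipschitz_on_line_component:
  fixes f :: "real^'n \<Rightarrow> real^'n"
  assumes "C-lipschitz_on UNIV f"
  shows "(C * norm u)-lipschitz_on UNIV (\<lambda>s. f (s *\<^sub>R u - b0) $ j)"
proof (rule lipschitz_onI)
  show "0 \<le> C * norm u"
    using lipschitz_on_nonneg[OF assms] by simp
  fix s s' :: real
  have "dist (f (s *\<^sub>R u - b0) $ j) (f (s' *\<^sub>R u - b0) $ j) \<le> dist (f (s *\<^sub>R u - b0)) (f (s' *\<^sub>R u - b0))"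
    by (rule dist_vec_nth_le)
  also have "\<dots> \<le> C * dist (s *\<^sub>R u - b0) (s' *\<^sub>R u - b0)"
    by (rule lipschitz_onD[OF assms]) auto
  also have "dist (s *\<^sub>R u - b0) (s' *\<^sub>R u - b0) = norm u * dist s s'"
    by (simp add: dist_norm dist_real_def scaleR_diff_left[symmetric])
  finally show "dist (f (s *\<^sub>R u - b0) $ j) (f (s' *\<^sub>R u - b0) $ j) \<le> C * norm u * dist s s'"
    by (simp add: mult_ac)
qed

text \<open>Affine invariance with the rank-one matrices \<open>W = c v e\<^sub>j\<^sup>T\<close> and \<open>A = \<alpha> u a\<^sup>T\<close>.\<close>

lemma affine_invariant_shear_field:
  fixes F :: "(real^'n \<Rightarrow> real^'n) set"
  assumes "affine_invariant F" and "f \<in> F"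
  shows "(\<lambda>x. (c * f ((\<alpha> * (a \<bullet> x) + \<beta>) *\<^sub>R u - b0) $ j) *\<^sub>R v) \<in> F"
proof -
  define W :: "real^'n^'n" where "W = (\<chi> i k. if k = j then c * v $ i else 0)"
  define A :: "real^'n^'n" where "A = (\<chi> i k. \<alpha> * u $ i * a $ k)"
  have A: "A *v x - (b0 - \<beta> *\<^sub>R u) = (\<alpha> * (a \<bullet> x) + \<beta>) *\<^sub>R u - b0" for x
    by (simp add: vec_eq_iff A_def matrix_vector_mult_def inner_vec_def sum_distrib_left algebra_simps)
  have W: "W *v y = (c * y $ j) *\<^sub>R v" for y
    by (simp add: vec_eq_iff W_def matrix_vector_mult_def if_distrib if_distribR mult_ac cong: if_cong)
  have "(\<lambda>x. W *v f (A *v x - (b0 - \<beta> *\<^sub>R u))) \<in> F"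
    using assms unfolding affine_invariant_def by blast
  then show ?thesis
    by (simp only: A W)
qed

lemma flow_shear_field:
  fixes G :: "real^'n \<Rightarrow> real^'n"
  assumes "glob_lipschitz G" and G: "\<And>x. G x = g (a \<bullet> x) *\<^sub>R v" and "a \<bullet> v = 0" and "0 \<le> t"
  shows "flow G t x = x + (t * g (a \<bullet> x)) *\<^sub>R v"
proof -
  obtain C where C: "C-lipschitz_on UNIV G"
    using assms(1) unfolding glob_lipschitz_def by blast
  have "((\<lambda>s. x + (s * g (a \<bullet> x)) *\<^sub>R v) has_vector_derivative G (x + (s * g (a \<bullet> x)) *\<^sub>R v))
      (at s within {0..t})" for s
    using \<open>a \<bullet> v = 0\<close> by (auto intro!: derivative_eq_intros simp: G inner_add_right)
  then show ?thesis
    by (intro flow_eqI[OF C \<open>0 \<le> t\<close>]) simp_all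
qed

lemma id_attainable:
  assumes "f \<in> F" and "glob_lipschitz f"
  shows "id \<in> attainable F"
  using assms flow_attainable[of f F 0] flow_zero unfolding glob_lipschitz_def by force

lemma shear_comp_attainable:
  fixes a :: "real^'n"
  assumes "(\<lambda>x. x + g1 (a \<bullet> x)) \<in> attainable F" and "(\<lambda>x. x + g2 (a \<bullet> x)) \<in> attainable F"
    and "\<And>s. a \<bullet> g1 s = 0"
  shows "(\<lambda>x. x + (g1 (a \<bullet> x) + g2 (a \<bullet> x))) \<in> attainable F"
proof -
  have "(\<lambda>x. x + g2 (a \<bullet> x)) \<circ> (\<lambda>x. x + g1 (a \<bullet> x)) = (\<lambda>x. x + (g1 (a \<bullet> x) + g2 (a \<bullet> x)))"
    using assms(3) by (simp add: fun_eq_iff inner_add_right add.assoc)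
  then show ?thesis
    using attainable_comp[OF assms(1,2)] by simp
qed

lemma reparam_shear_attainable:
  fixes F :: "(real^'n \<Rightarrow> real^'n) set"
  assumes ai: "affine_invariant F" and lip: "\<forall>g\<in>F. glob_lipschitz g" and "f \<in> F"
    and "a \<bullet> v = 0" and "H \<in> reparam_span (\<lambda>s. f (s *\<^sub>R u - b0) $ j)"
  shows "(\<lambda>x. x + H (a \<bullet> x) *\<^sub>R v) \<in> attainable F"
  using assms(5)
proof (induction rule: reparam_span.induct)
  case (reparam c \<alpha> \<beta>)
  define G where "G x = (c * f ((\<alpha> * (a \<bullet> x) + \<beta>) *\<^sub>R u - b0) $ j) *\<^sub>R v" for x
  have "G \<in> F"
    unfolding G_def by (rule affine_invariant_shear_field[OF ai \<open>f \<in> F\<close>])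
  moreover have "flow G 1 = (\<lambda>x. x + (c * f ((\<alpha> * (a \<bullet> x) + \<beta>) *\<^sub>R u - b0) $ j) *\<^sub>R v)"
    using flow_shear_field[of G "\<lambda>s. c * f ((\<alpha> * s + \<beta>) *\<^sub>R u - b0) $ j" a v 1] lip \<open>G \<in> F\<close> \<open>a \<bullet> v = 0\<close>
    by (auto simp: G_def)
  ultimately show ?case
    using flow_attainable[of G F 1] by simp
next
  case (add H1 H2)
  then show ?case
    using shear_comp_attainable[of "\<lambda>s. H1 s *\<^sub>R v" a F "\<lambda>s. H2 s *\<^sub>R v"] \<open>a \<bullet> v = 0\<close>
    by (simp add: scaleR_add_left)
qed

text \<open>Compose shears along the projections \<open>w k\<close> of the coordinate axes onto \<open>a\<^sup>\<bottom>\<close>.\<close>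

lemma shear_attainable_on_levels:
  fixes F :: "(real^'n \<Rightarrow> real^'n) set"
  assumes ai: "affine_invariant F" and lip: "\<forall>g\<in>F. glob_lipschitz g" and "f \<in> F"
    and interp: "\<And>z. \<exists>H\<in>reparam_span (\<lambda>s. f (s *\<^sub>R u - b0) $ j). \<forall>s\<in>S. H s = z s"
    and orth: "\<And>s. s \<in> S \<Longrightarrow> a \<bullet> \<Phi> s = 0"
  shows "\<exists>\<phi>\<in>attainable F. \<forall>x. a \<bullet> x \<in> S \<longrightarrow> \<phi> x = x + \<Phi> (a \<bullet> x)"
proof -
  define w where "w k = axis k 1 - (a $ k / (a \<bullet> a)) *\<^sub>R a" for k
  have aw: "a \<bullet> w k = 0" for k
    by (cases "a = 0") (simp_all add: w_def inner_diff_right inner_axis)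
  have "\<forall>k. \<exists>H\<in>reparam_span (\<lambda>s. f (s *\<^sub>R u - b0) $ j). \<forall>s\<in>S. H s = \<Phi> s $ k"
    by (intro allI interp)
  then obtain H where H: "\<And>k. H k \<in> reparam_span (\<lambda>s. f (s *\<^sub>R u - b0) $ j)"
    and H_eq: "\<And>k s. s \<in> S \<Longrightarrow> H k s = \<Phi> s $ k"
    unfolding Bex_def choice_iff by blast
  have attainable: "(\<lambda>x. x + (\<Sum>k\<in>K. H k (a \<bullet> x) *\<^sub>R w k)) \<in> attainable F"
    if "finite K" for K
    using that
  proof (induction K rule: finite_induct)
    case empty
    then show ?case
      using id_attainable[of f F] \<open>f \<in> F\<close> lip by (simp add: id_def)
  next
    case (insert k K)
    then show ?case
      using shear_comp_attainable[OF insert.IH reparam_shear_attainable[OF ai lip \<open>f \<in> F\<close> aw H]]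
      by (simp add: aw inner_sum_right add.commute)
  qed
  have displacement: "(\<Sum>k\<in>UNIV. H k s *\<^sub>R w k) = \<Phi> s" if "s \<in> S" for s
  proof -
    have "(\<Sum>k\<in>UNIV. H k s *\<^sub>R w k)
        = (\<Sum>k\<in>UNIV. \<Phi> s $ k *\<^sub>R axis k 1) - (\<Sum>k\<in>UNIV. \<Phi> s $ k * a $ k / (a \<bullet> a)) *\<^sub>R a"
      by (simp add: H_eq[OF that] w_def scaleR_diff_right sum_subtractf scaleR_sum_left)
    also have "(\<Sum>k\<in>UNIV. \<Phi> s $ k * a $ k / (a \<bullet> a)) = 0"
      using orth[OF that] by (simp add: inner_vec_def sum_divide_distrib[symmetric] mult.commute)
    finally show ?thesis
      using basis_expansion[of "\<Phi> s"] by (simp add: scalar_mult_eq_scaleR)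
  qed
  show ?thesis
    using attainable[of UNIV] displacement by (intro bexI) auto
qed

lemma shear_attainable_moves_points:
  fixes F :: "(real^'n \<Rightarrow> real^'n) set"
  assumes ai: "affine_invariant F" and lip: "\<forall>g\<in>F. glob_lipschitz g" and "f \<in> F"
    and interp: "\<And>S z. finite S \<Longrightarrow> \<exists>H\<in>reparam_span (\<lambda>s. f (s *\<^sub>R u - b0) $ j). \<forall>s\<in>S. H s = z s"
    and "finite I" and inj: "inj_on (\<lambda>i. a \<bullet> p i) I" and level: "\<And>i. i \<in> I \<Longrightarrow> a \<bullet> q i = a \<bullet> p i"
  shows "\<exists>\<phi>\<in>attainable F. \<forall>i\<in>I. \<phi> (p i) = q i"
proof -
  define idx where "idx = inv_into I (\<lambda>i. a \<bullet> p i)"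
  have idx: "idx (a \<bullet> p i) = i" if "i \<in> I" for i
    using inv_into_f_f[OF inj that] by (simp add: idx_def)
  have "\<exists>\<phi>\<in>attainable F. \<forall>x. a \<bullet> x \<in> (\<lambda>i. a \<bullet> p i) ` I \<longrightarrow>
      \<phi> x = x + (q (idx (a \<bullet> x)) - p (idx (a \<bullet> x)))"
    using \<open>finite I\<close> level idx
    by (intro shear_attainable_on_levels[OF ai lip \<open>f \<in> F\<close> interp]) (auto simp: inner_diff_right)
  then obtain \<phi> where "\<phi> \<in> attainable F"
    and \<phi>: "\<And>x. a \<bullet> x \<in> (\<lambda>i. a \<bullet> p i) ` I \<Longrightarrow> \<phi> x = x + (q (idx (a \<bullet> x)) - p (idx (a \<bullet> x)))"
    by blast
  have "\<phi> (p i) = q i" if "i \<in> I" for i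
    using \<phi>[of "p i"] idx[OF that] that by simp
  then show ?thesis
    using \<open>\<phi> \<in> attainable F\<close> by blast
qed

lemma exists_nonorthogonal_to_finite:
  assumes "finite D" and "0 \<notin> D"
  obtains a :: "'a::euclidean_space" where "\<And>d. d \<in> D \<Longrightarrow> a \<bullet> d \<noteq> 0"
proof -
  have "negligible (\<Union>d\<in>D. {x::'a. d \<bullet> x = 0})"
    using assms by (intro negligible_Union) (auto intro!: negligible_hyperplane)
  then obtain a where "a \<notin> (\<Union>d\<in>D. {x::'a. d \<bullet> x = 0})"
    using negligible_subset[of _ UNIV] non_negligible_UNIV by blast
  then show thesis
    using that by (metis (mono_tags, lifting) UN_I inner_commute mem_Collect_eq)
qed

lemma exists_separating_direction:
  fixes xs ys :: "'i \<Rightarrow> 'a::euclidean_space"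
  assumes "finite I" and "inj_on xs I" and "inj_on ys I"
  obtains a where "a \<noteq> 0" and "inj_on (\<lambda>i. a \<bullet> xs i) I" and "inj_on (\<lambda>i. a \<bullet> ys i) I"
proof -
  obtain e :: 'a where "e \<in> Basis"
    using nonempty_Basis by blast
  define diffs where "diffs zs = (\<lambda>(i, k). zs i - zs k) ` {(i, k) \<in> I \<times> I. i \<noteq> k}" for zs :: "'i \<Rightarrow> 'a"
  have "finite (diffs zs)" for zs
    unfolding diffs_def using \<open>finite I\<close> by (auto intro: finite_subset[of _ "I \<times> I"])
  moreover have "0 \<notin> diffs zs" if "inj_on zs I" for zs
  proof
    assume "0 \<in> diffs zs"
    then obtain i k where "i \<in> I" "k \<in> I" "i \<noteq> k" "zs i = zs k"
      by (auto simp: diffs_def)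
    with that show False
      by (meson inj_onD)
  qed
  ultimately have "finite (insert e (diffs xs \<union> diffs ys))" "0 \<notin> insert e (diffs xs \<union> diffs ys)"
    using assms(2,3) nonzero_Basis[OF \<open>e \<in> Basis\<close>] by simp_all
  then obtain a where a: "\<And>d. d \<in> insert e (diffs xs \<union> diffs ys) \<Longrightarrow> a \<bullet> d \<noteq> 0"
    using exists_nonorthogonal_to_finite by blast
  have "inj_on (\<lambda>i. a \<bullet> zs i) I" if "diffs zs \<subseteq> insert e (diffs xs \<union> diffs ys)" for zs
  proof (rule inj_onI, rule ccontr)
    fix i k assume "i \<in> I" "k \<in> I" "a \<bullet> zs i = a \<bullet> zs k" "i \<noteq> k"
    then have "zs i - zs k \<in> diffs zs" and "a \<bullet> (zs i - zs k) = 0"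
      by (auto simp: diffs_def inner_diff_right)
    with that a show False
      by blast
  qed
  moreover have "a \<noteq> 0"
    using a[of e] by auto
  ultimately show thesis
    using that by blast
qed

text \<open>Three shears: along \<open>a\<close> to put the points on distinct levels of \<open>b\<close>, along \<open>b\<close> to
  give them the \<open>a\<close>-levels of their targets, and along \<open>a\<close> again onto the targets.\<close>

lemma interpolation_by_shears:
  fixes F :: "(real^'n \<Rightarrow> real^'n) set" and xs ys :: "nat \<Rightarrow> real^'n"
  assumes moves: "\<And>a p q. inj_on (\<lambda>i. a \<bullet> p i) {..<N} \<Longrightarrow> (\<And>i. i \<in> {..<N} \<Longrightarrow> a \<bullet> q i = a \<bullet> p i)
      \<Longrightarrow> \<exists>\<phi>\<in>attainable F. \<forall>i\<in>{..<N}. \<phi> (p i) = q i"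
    and "a \<noteq> 0" and "b \<noteq> 0" and "a \<bullet> b = 0"
    and "inj_on (\<lambda>i. a \<bullet> xs i) {..<N}" and "inj_on (\<lambda>i. a \<bullet> ys i) {..<N}"
  shows "\<exists>\<phi>\<in>attainable F. \<forall>i<N. \<phi> (xs i) = ys i"
proof -
  define zs where "zs i = xs i + ((real i - b \<bullet> xs i) / (b \<bullet> b)) *\<^sub>R b" for i
  define vs where "vs i = zs i + ((a \<bullet> ys i - a \<bullet> zs i) / (a \<bullet> a)) *\<^sub>R a" for i
  have b_zs: "b \<bullet> zs i = real i" for i
    using \<open>b \<noteq> 0\<close> by (simp add: zs_def inner_add_right)
  have a_vs: "a \<bullet> vs i = a \<bullet> ys i" for i
    using \<open>a \<noteq> 0\<close> by (simp add: vs_def inner_add_right)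
  obtain \<phi>1 where "\<phi>1 \<in> attainable F" "\<forall>i<N. \<phi>1 (xs i) = zs i"
    using moves[of a xs zs] \<open>a \<bullet> b = 0\<close> assms(5) by (auto simp: zs_def inner_add_right)
  moreover obtain \<phi>2 where "\<phi>2 \<in> attainable F" "\<forall>i<N. \<phi>2 (zs i) = vs i"
    using moves[of b zs vs] \<open>a \<bullet> b = 0\<close>
    by (auto simp: b_zs vs_def inner_add_right inner_commute inj_on_def)
  moreover have "inj_on (\<lambda>i. a \<bullet> vs i) {..<N}"
    using assms(6) by (simp add: a_vs)
  then obtain \<phi>3 where "\<phi>3 \<in> attainable F" "\<forall>i<N. \<phi>3 (vs i) = ys i"
    using moves[of a vs ys] a_vs by auto
  ultimately show ?thesis
    by (intro bexI[of _ "\<phi>3 \<circ> \<phi>2 \<circ> \<phi>1"] attainable_comp) auto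
qed

lemma nonaffine_imp_exact_universal_interpolation:
  fixes F :: "(real^'n \<Rightarrow> real^'n) set"
  assumes "2 \<le> CARD('n)" and lip: "\<forall>g\<in>F. glob_lipschitz g" and ai: "affine_invariant F"
    and "f \<in> F" and "\<not> affine_scalar (\<lambda>x. f x $ j)"
  shows "exact_universal_interpolation F"
  unfolding exact_universal_interpolation_def
proof (intro allI impI)
  fix N :: nat and xs ys :: "nat \<Rightarrow> real^'n"
  assume "inj_on xs {..<N}" "inj_on ys {..<N}"
  obtain u b0 where nonaffine: "\<not> affine_fun (\<lambda>s. f (s *\<^sub>R u - b0) $ j)"
    using nonaffine_on_line[OF assms(5)] by blast
  obtain C where "C-lipschitz_on UNIV f"
    using lip \<open>f \<in> F\<close> unfolding glob_lipschitz_def by blast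
  then have "\<exists>H\<in>reparam_span (\<lambda>s. f (s *\<^sub>R u - b0) $ j). \<forall>s\<in>S. H s = z s" if "finite S" for S z
    using reparam_span_interpolates[OF lipschitz_on_line_component nonaffine that] by blast
  note moves = shear_attainable_moves_points[OF ai lip \<open>f \<in> F\<close> this finite_lessThan]
  obtain a :: "real^'n" where "a \<noteq> 0" "inj_on (\<lambda>i. a \<bullet> xs i) {..<N}" "inj_on (\<lambda>i. a \<bullet> ys i) {..<N}"
    using exists_separating_direction[OF finite_lessThan \<open>inj_on xs {..<N}\<close> \<open>inj_on ys {..<N}\<close>] .
  moreover obtain b :: "real^'n" where "b \<noteq> 0" "a \<bullet> b = 0"
    using orthogonal_to_vector_exists[of a] assms(1) by (auto simp: orthogonal_def)
  ultimately show "\<exists>\<phi>\<in>attainable F. \<forall>i<N. \<phi> (xs i) = ys i"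
    by (intro interpolation_by_shears[OF moves]) auto
qed

theorem theorem2p6:
  fixes F :: "(real^'n \<Rightarrow> real^'n) set"
  assumes "CARD('n) \<ge> 2"
    and "\<forall>g\<in>F. glob_lipschitz g"
    and "affine_invariant F"
  shows "exact_universal_interpolation F \<longleftrightarrow>
         (\<exists>f\<in>F. \<exists>j. \<not> affine_scalar (\<lambda>x. f x $ j))"
  using exact_universal_interpolation_imp_nonaffine[OF assms(2)]
    nonaffine_imp_exact_universal_interpolation[OF assms]
  by blast

end
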